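(* Let $\mathbf{E},\mathbf{Y}$ be Euclidean spaces, $\mathcal{X}\subset\mathbf{E}$ nonempty closed convex, $h\colon\mathbf{Y}\to\mathbb{R}$ convex, $F\colon\mathbf{E}\to\mathbf{Y}$ continuously differentiable, $f=h\circ F$, $f_x(y)=h(F(x)+\nabla F(x)(y-x))$. Assume $\mathcal{X}^*=\operatorname{argmin}_{\mathcal{X}}f\neq\emptyset$, that $f(x)-\min_{\mathcal{X}}f\ge\mu\,\mathrm{dist}(x,\mathcal{X}^* )$ for all $x\in\mathcal{X}$ for some $\mu>0$, and that for some reals $a>0$, $b\ge0$, $$|f(y)-f_x(y)|\le a\|y-x\|^2+b\|y-x\|\quad\forall x,y\in\mathcal{X}.$$ Let $x_0\in\mathcal{X}$ and let $x_{k+1}$ be any minimizer of $x\mapsto f_{x_k}(x)+a\|x-x_k\|^2+b\|x-x_k\|$ over $\mathcal{X}$. If $\mathrm{dist}(x_0,\mathcal{X}^* )\le\frac{\mu-2b}{2a}$, then for all $k\ge0$, $$\mathrm{dist}(x_{k+1},\mathcal{X}^* )\le\frac{2\big(b+a\,\mathrm{dist}(x_k,\mathcal{X}^* )\big)}{\mu}\,\mathrm{dist}(x_k,\mathcal{X}^* ).$$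
   Context: $\|\cdot\|$ is the Euclidean norm on $\mathbf{E}$, $\mathrm{dist}$ the Euclidean distance, and $\nabla F(x)$ the Jacobian of $F$ at $x$. *)

theory Defs
  imports "HOL-Analysis.Analysis"
begin

definition lin_model :: "('y \<Rightarrow> real) \<Rightarrow> ('e::real_normed_vector \<Rightarrow> 'y::real_normed_vector)
    \<Rightarrow> ('e \<Rightarrow> ('e \<Rightarrow>\<^sub>L 'y)) \<Rightarrow> 'e \<Rightarrow> 'e \<Rightarrow> real" where
  "lin_model h F DF x y = h (F x + blinfun_apply (DF x) (y - x))"

definition argmin_on :: "('e \<Rightarrow> real) \<Rightarrow> 'e set \<Rightarrow> 'e set" where
  "argmin_on g X = {x \<in> X. \<forall>y\<in>X. g x \<le> g y}"

end

theory Submission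
  imports Defs
begin

text \<open>Let \<open>x\<^sup>*\<close> be a point of \<open>X\<^sup>*\<close> nearest to \<open>x\<^sub>k\<close>, at distance \<open>d\<close>. The model
  error bound gives \<open>f(x\<^sub>k\<^sub>+\<^sub>1) \<le>\<close> the regularised model value at \<open>x\<^sub>k\<^sub>+\<^sub>1\<close>, which is at most
  its value at \<open>x\<^sup>*\<close>, which in turn is at most \<open>f(x\<^sup>*) + 2(a d\<^sup>2 + b d)\<close>. Sharpness converts
  this gap \<open>f(x\<^sub>k\<^sub>+\<^sub>1) - min f \<le> 2(b + a d) d\<close> into the distance bound. The hypothesis on
  \<open>dist(x\<^sub>0, X\<^sup>*)\<close> only matters for turning the bound into a contraction.\<close>

lemma closed_argmin_on:
  assumes "closed X" and "continuous_on X g"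
  shows "closed (argmin_on g X)"
proof (cases "X = {}")
  case False
  have "argmin_on g X = (\<Inter>y\<in>X. X \<inter> g -` {..g y})"
    using False unfolding argmin_on_def by auto
  moreover have "closed (X \<inter> g -` {..g y})" for y
    using assms by (intro continuous_closed_preimage) auto
  ultimately show ?thesis by (metis closed_INT)
qed (simp add: argmin_on_def)

lemma regularised_model_step_gap:
  fixes f m :: "'e::real_normed_vector \<Rightarrow> real"
  assumes model_err: "\<And>y. y \<in> X \<Longrightarrow> \<bar>f y - m y\<bar> \<le> a * (norm (y - z))\<^sup>2 + b * norm (y - z)"
    and x'_min: "x' \<in> argmin_on (\<lambda>y. m y + a * (norm (y - z))\<^sup>2 + b * norm (y - z)) X"
    and yX: "y \<in> X"
  shows "f x' - f y \<le> 2 * (b + a * norm (y - z)) * norm (y - z)"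
proof -
  have x'X: "x' \<in> X" using x'_min unfolding argmin_on_def by auto
  have "f x' \<le> m x' + a * (norm (x' - z))\<^sup>2 + b * norm (x' - z)"
    using model_err[OF x'X] by (simp add: abs_le_iff)
  also have "\<dots> \<le> m y + a * (norm (y - z))\<^sup>2 + b * norm (y - z)"
    using x'_min yX unfolding argmin_on_def by auto
  also have "\<dots> \<le> f y + 2 * (a * (norm (y - z))\<^sup>2 + b * norm (y - z))"
    using model_err[OF yX] by (simp add: abs_le_iff)
  finally show ?thesis by (simp add: power2_eq_square algebra_simps)
qed

lemma sharp_regularised_model_step_infdist:
  fixes f m :: "'e::{real_normed_vector, heine_borel} \<Rightarrow> real" and X :: "'e set"
  defines "S \<equiv> argmin_on f X"
  assumes S_closed: "closed S" and S_ne: "S \<noteq> {}" and \<mu>_pos: "\<mu> > 0"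
    and sharp: "\<And>y. y \<in> S \<Longrightarrow> \<mu> * infdist x' S \<le> f x' - f y"
    and model_err: "\<And>y. y \<in> X \<Longrightarrow> \<bar>f y - m y\<bar> \<le> a * (norm (y - z))\<^sup>2 + b * norm (y - z)"
    and x'_min: "x' \<in> argmin_on (\<lambda>y. m y + a * (norm (y - z))\<^sup>2 + b * norm (y - z)) X"
  shows "infdist x' S \<le> 2 * (b + a * infdist z S) / \<mu> * infdist z S"
proof -
  obtain y where yS: "y \<in> S" and y_near: "infdist z S = dist z y"
    using infdist_attains_inf[OF S_closed S_ne] by blast
  have dist_eq: "norm (y - z) = infdist z S"
    using y_near by (simp add: dist_norm norm_minus_commute)
  have "y \<in> X" using yS unfolding S_def argmin_on_def by blast
  with model_err x'_min have "f x' - f y \<le> 2 * (b + a * norm (y - z)) * norm (y - z)"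
    by (rule regularised_model_step_gap)
  then have "f x' - f y \<le> 2 * (b + a * infdist z S) * infdist z S"
    unfolding dist_eq .
  then have "\<mu> * infdist x' S \<le> 2 * (b + a * infdist z S) * infdist z S"
    using sharp[OF yS] by linarith
  then show ?thesis using \<mu>_pos by (simp add: field_simps)
qed

theorem lemma7p4:
  fixes X :: "'e::euclidean_space set"
    and h :: "'y::euclidean_space \<Rightarrow> real"
    and F :: "'e \<Rightarrow> 'y"
    and DF :: "'e \<Rightarrow> ('e \<Rightarrow>\<^sub>L 'y)"
    and \<mu> a b :: real
    and x :: "nat \<Rightarrow> 'e"
  assumes X_ne: "X \<noteq> {}" and X_closed: "closed X" and X_convex: "convex X"
    and h_convex: "convex_on UNIV h"
    and F_deriv: "\<And>z. (F has_derivative blinfun_apply (DF z)) (at z)"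
    and DF_cont: "continuous_on UNIV DF"
    and Xs_ne: "argmin_on (h \<circ> F) X \<noteq> {}"
    and \<mu>_pos: "\<mu> > 0"
    and sharp: "\<And>z xs. z \<in> X \<Longrightarrow> xs \<in> argmin_on (h \<circ> F) X \<Longrightarrow>
        (h \<circ> F) z - (h \<circ> F) xs \<ge> \<mu> * infdist z (argmin_on (h \<circ> F) X)"
    and a_pos: "a > 0" and b_nonneg: "b \<ge> 0"
    and approx: "\<And>z y. z \<in> X \<Longrightarrow> y \<in> X \<Longrightarrow>
        \<bar>(h \<circ> F) y - lin_model h F DF z y\<bar> \<le> a * (norm (y - z))\<^sup>2 + b * norm (y - z)"
    and x0: "x 0 \<in> X"
    and step: "\<And>k. x (Suc k) \<in> argmin_on
        (\<lambda>z. lin_model h F DF (x k) z + a * (norm (z - x k))\<^sup>2 + b * norm (z - x k)) X"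
    and init: "infdist (x 0) (argmin_on (h \<circ> F) X) \<le> (\<mu> - 2 * b) / (2 * a)"
  shows "\<forall>k. infdist (x (Suc k)) (argmin_on (h \<circ> F) X)
      \<le> 2 * (b + a * infdist (x k) (argmin_on (h \<circ> F) X)) / \<mu> * infdist (x k) (argmin_on (h \<circ> F) X)"
proof
  fix k
  have "continuous_on UNIV h"
    using convex_on_continuous[OF open_UNIV h_convex] .
  moreover have "continuous_on UNIV F"
    using F_deriv has_derivative_continuous continuous_at_imp_continuous_on by blast
  ultimately have "continuous_on X (h \<circ> F)"
    by (metis continuous_on_compose continuous_on_subset subset_UNIV)
  then have S_closed: "closed (argmin_on (h \<circ> F) X)"
    using closed_argmin_on X_closed by blast
  have xX: "x j \<in> X" for j
    using x0 step unfolding argmin_on_def by (cases j) auto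
  show "infdist (x (Suc k)) (argmin_on (h \<circ> F) X)
      \<le> 2 * (b + a * infdist (x k) (argmin_on (h \<circ> F) X)) / \<mu> * infdist (x k) (argmin_on (h \<circ> F) X)"
    using sharp_regularised_model_step_infdist[OF S_closed Xs_ne \<mu>_pos sharp[OF xX] approx[OF xX] step] .
qed

end
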